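(* Under hypotheses (A) and (B), $$\log r_e^*\le-\sup_{\gamma\in\Gamma}\min_{1\le i\le d}\frac{\gamma_i}{G_{ii}}\Bigl(\frac{\mu_i}{1+\gamma_i}-\nu_i\Bigr).$$
   Context: Jackson network with $d$ queues: arrival rates $\lambda_i\ge0$, service rates $\mu_i>0$, routing matrix $P=(p_{ij})_{i,j=1}^d$ nonnegative with $p_{ii}=0$, $\sum_jp_{ij}\le1$, $p_{i0}=1-\sum_jp_{ij}$. Queue-length process $(Z(t))$: continuous-time Markov process on $\mathbb{Z}_+^d$ with jumps $+\epsilon^i$ at rate $\lambda_i$, $-\epsilon^i$ at rate $\mu_ip_{i0}$, $\epsilon^j-\epsilon^i$ at rate $\mu_ip_{ij}$ (jumps leaving $\mathbb{Z}_+^d$ suppressed). Hypothesis (A): the kernel of these jump rates on $\mathbb{Z}^d$ is irreducible (equivalently spectral radius of $P$ $<1$ and for every $i$ some $\lambda_jp^{(n)}_{ji}>0$); then the traffic equations $\nu_j=\lambda_j+\sum_i\nu_ip_{ij}$ have a unique solution with $\nu_i>0$. Hypothesis (B): $\nu_i<\mu_i$ for all $i$. $G=(I-P)^{-1}$. $Q_{ij}$: probability that the chain on $\{0,\dots,d\}$ with transitions $p_{ij}$ ($0$ absorbing) started at $i$ ever visits $j$ (time $0$ included). For $\gamma\in\mathbb{R}_+^d$, $\overrightarrow{\gamma_i}$ has components $\gamma_i^j=\log(1+Q_{ji}\gamma_i)$; $\Gamma$ is the set of $\gamma\in\mathbb{R}_+^d$ such that for every $i$ and nonzero $v\in\mathbb{R}_+^d$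 with $v^i=0$, $\overrightarrow{\gamma_i}\cdot v<\max_j\overrightarrow{\gamma_j}\cdot v$. With $\tau_E=\inf\{t>0:Z(t)\in E\}$, the essential spectral radius $r_e^*$ is the infimum of all $r>0$ for which some finite $E\subset\mathbb{Z}_+^d$ gives $\int_0^\infty r^{-t}\mathbb{P}_x(Z(t)=y,\tau_E>t)\,dt<\infty$ for all $x,y\notin E$. *)

theory Defs
  imports "HOL-Analysis.Analysis"
begin

definition exit_prob :: "real^'d^'d \<Rightarrow> 'd::finite \<Rightarrow> real" where
  "exit_prob P i = 1 - (\<Sum>j\<in>UNIV. P $ i $ j)"

definition jackson_params ::
  "('d::finite \<Rightarrow> real) \<Rightarrow> ('d \<Rightarrow> real) \<Rightarrow> real^'d^'d \<Rightarrow> bool" where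
  "jackson_params lam mu P \<longleftrightarrow>
     (\<forall>i. lam i \<ge> 0) \<and> (\<forall>i. mu i > 0) \<and> (\<forall>i j. P $ i $ j \<ge> 0) \<and>
     (\<forall>i. P $ i $ i = 0) \<and> (\<forall>i. (\<Sum>j\<in>UNIV. P $ i $ j) \<le> 1)"

definition unitz :: "'d \<Rightarrow> 'd \<Rightarrow> int" where
  "unitz i = (\<lambda>k. if k = i then 1 else 0)"

text \<open>One positive-rate jump of the free (unsuppressed) kernel on Z^d.\<close>
definition free_step ::
  "('d::finite \<Rightarrow> real) \<Rightarrow> ('d \<Rightarrow> real) \<Rightarrow> real^'d^'d \<Rightarrow> ('d \<Rightarrow> int) \<Rightarrow> ('d \<Rightarrow> int) \<Rightarrow> bool" where
  "free_step lam mu P x y \<longleftrightarrow>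
     (\<exists>i. (lam i > 0 \<and> y = (\<lambda>k. x k + unitz i k)) \<or>
          (mu i * exit_prob P i > 0 \<and> y = (\<lambda>k. x k - unitz i k)) \<or>
          (\<exists>j. mu i * P $ i $ j > 0 \<and> y = (\<lambda>k. x k - unitz i k + unitz j k)))"

text \<open>Hypothesis (A): the kernel of jump rates on Z^d is irreducible.\<close>
definition hypA :: "('d::finite \<Rightarrow> real) \<Rightarrow> ('d \<Rightarrow> real) \<Rightarrow> real^'d^'d \<Rightarrow> bool" where
  "hypA lam mu P \<longleftrightarrow> (\<forall>x y. (free_step lam mu P)\<^sup>*\<^sup>* x y)"

definition traffic :: "('d::finite \<Rightarrow> real) \<Rightarrow> real^'d^'d \<Rightarrow> ('d \<Rightarrow> real) \<Rightarrow> bool" where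
  "traffic lam P nu \<longleftrightarrow> (\<forall>j. nu j = lam j + (\<Sum>i\<in>UNIV. nu i * P $ i $ j))"

definition Gmat :: "real^'d^'d \<Rightarrow> real^'d^'d" where
  "Gmat P = matrix_inv (mat 1 - P)"

text \<open>First-passage probabilities of the routing chain on {0,...,d} (0 absorbing):
  hit n i j = probability that the chain started at i visits j for the first time at step n.
  Since 0 is absorbing and different from j, moves to 0 contribute nothing.\<close>
primrec hit :: "real^'d^'d \<Rightarrow> nat \<Rightarrow> 'd::finite \<Rightarrow> 'd \<Rightarrow> real" where
  "hit P 0 i j = (if i = j then 1 else 0)"
| "hit P (Suc n) i j = (if i = j then 0 else (\<Sum>k\<in>UNIV. P $ i $ k * hit P n k j))"

text \<open>Q i j: probability that the routing chain started at i ever visits j (time 0 included).\<close>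
definition Qhit :: "real^'d^'d \<Rightarrow> 'd::finite \<Rightarrow> 'd \<Rightarrow> real" where
  "Qhit P i j = (\<Sum>n. hit P n i j)"

definition gvec :: "real^'d^'d \<Rightarrow> ('d::finite \<Rightarrow> real) \<Rightarrow> 'd \<Rightarrow> 'd \<Rightarrow> real" where
  "gvec P \<gamma> i j = ln (1 + Qhit P j i * \<gamma> i)"

definition Gamma_set :: "real^'d^'d \<Rightarrow> ('d::finite \<Rightarrow> real) set" where
  "Gamma_set P = {\<gamma>. (\<forall>i. \<gamma> i \<ge> 0) \<and>
     (\<forall>i v. (\<forall>j. v j \<ge> 0) \<and> (\<exists>k. v k \<noteq> 0) \<and> v i = 0 \<longrightarrow>
        (\<Sum>k\<in>UNIV. gvec P \<gamma> i k * v k) < (MAX j. \<Sum>k\<in>UNIV. gvec P \<gamma> j k * v k))}"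

text \<open>Jump rates of the queue-length process on Z_+^d (jumps leaving Z_+^d suppressed).\<close>
definition jrate ::
  "('d::finite \<Rightarrow> real) \<Rightarrow> ('d \<Rightarrow> real) \<Rightarrow> real^'d^'d \<Rightarrow> ('d \<Rightarrow> nat) \<Rightarrow> ('d \<Rightarrow> nat) \<Rightarrow> real" where
  "jrate lam mu P x y =
     (\<Sum>i\<in>UNIV. if y = x(i := Suc (x i)) then lam i else 0) +
     (\<Sum>i\<in>UNIV. if 0 < x i \<and> y = x(i := x i - 1) then mu i * exit_prob P i else 0) +
     (\<Sum>i\<in>UNIV. \<Sum>j\<in>UNIV. if j \<noteq> i \<and> 0 < x i \<and> y = (x(i := x i - 1))(j := Suc (x j))
                         then mu i * P $ i $ j else 0)"

text \<open>Uniformization constant (dominates the total jump rate out of every state).\<close>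
definition unif_const :: "('d::finite \<Rightarrow> real) \<Rightarrow> ('d \<Rightarrow> real) \<Rightarrow> real" where
  "unif_const lam mu = 1 + (\<Sum>i\<in>UNIV. lam i) + (\<Sum>i\<in>UNIV. mu i)"

definition unif_kernel ::
  "('d::finite \<Rightarrow> real) \<Rightarrow> ('d \<Rightarrow> real) \<Rightarrow> real^'d^'d \<Rightarrow> ('d \<Rightarrow> nat) \<Rightarrow> ('d \<Rightarrow> nat) \<Rightarrow> real" where
  "unif_kernel lam mu P x y =
     jrate lam mu P x y / unif_const lam mu +
     (if y = x then 1 - (\<Sum>\<^sub>\<infinity>z. jrate lam mu P x z) / unif_const lam mu else 0)"

primrec taboo_pow ::
  "('d::finite \<Rightarrow> real) \<Rightarrow> ('d \<Rightarrow> real) \<Rightarrow> real^'d^'d \<Rightarrow> ('d \<Rightarrow> nat) set \<Rightarrow> nat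
     \<Rightarrow> ('d \<Rightarrow> nat) \<Rightarrow> ('d \<Rightarrow> nat) \<Rightarrow> real" where
  "taboo_pow lam mu P E 0 x y = (if x = y then 1 else 0)"
| "taboo_pow lam mu P E (Suc n) x y =
     (\<Sum>\<^sub>\<infinity>z. unif_kernel lam mu P x z * (if z \<in> E then 0 else taboo_pow lam mu P E n z y))"

text \<open>P_x(Z(t) = y, tau_E > t) for x, y outside E, via the uniformization construction
  Z(t) = Y_{N(t)} with N a Poisson process of rate c independent of the jump chain Y.\<close>
definition taboo_prob ::
  "('d::finite \<Rightarrow> real) \<Rightarrow> ('d \<Rightarrow> real) \<Rightarrow> real^'d^'d \<Rightarrow> ('d \<Rightarrow> nat) set \<Rightarrow> real
     \<Rightarrow> ('d \<Rightarrow> nat) \<Rightarrow> ('d \<Rightarrow> nat) \<Rightarrow> real" where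
  "taboo_prob lam mu P E t x y =
     (\<Sum>n. exp (- unif_const lam mu * t) * (unif_const lam mu * t) ^ n / fact n
            * taboo_pow lam mu P E n x y)"

definition ess_set :: "('d::finite \<Rightarrow> real) \<Rightarrow> ('d \<Rightarrow> real) \<Rightarrow> real^'d^'d \<Rightarrow> real set" where
  "ess_set lam mu P = {r. r > 0 \<and> (\<exists>E. finite E \<and> (\<forall>x y. x \<notin> E \<longrightarrow> y \<notin> E \<longrightarrow>
      (\<integral>\<^sup>+ t\<in>{0..}. ennreal (r powr (- t) * taboo_prob lam mu P E t x y) \<partial>lborel) < \<infinity>))}"

definition ess_spec_rad :: "('d::finite \<Rightarrow> real) \<Rightarrow> ('d \<Rightarrow> real) \<Rightarrow> real^'d^'d \<Rightarrow> real" where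
  "ess_spec_rad lam mu P = Inf (ess_set lam mu P)"

end

(*
  Uniformize the queue-length process at rate c = unif_const: the taboo probabilities become a
  Poisson mixture of the taboo powers of the jump chain, so a geometric drift condition
  generator f \<le> -a f outside a finite set E makes them decay like exp (-a t), and then every r with
  ln r > -a is admissible. For \<gamma> \<in> Gamma_set P take f x = \<Sum>_j exp (\<gamma>_j \<cdot> x), where
  \<gamma>_j is the vector gvec P \<gamma> j. While queue j is busy the j-th summand drifts at rate
  -\<gamma>_j / G_jj (\<mu>_j / (1 + \<gamma>_j) - \<nu>_j), by the traffic equations and the harmonicity of Q;
  while queue j is empty, the defining property of Gamma_set makes that summand exponentially
  small compared to f. Hence a can be any number below the minimum m, and all r > exp (-m)
  are admissible. Conversely, the probability of no jump before t shows that admissible r exceed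
  exp (-c), so the infimum is positive and its logarithm is at most -m.
*)

theory Submission
  imports Defs "HOL-Probability.Distributions"
begin

definition arrive :: "('d \<Rightarrow> nat) \<Rightarrow> 'd \<Rightarrow> 'd \<Rightarrow> nat" where
  "arrive x i = x(i := Suc (x i))"

definition depart :: "('d \<Rightarrow> nat) \<Rightarrow> 'd \<Rightarrow> 'd \<Rightarrow> nat" where
  "depart x i = x(i := x i - 1)"

definition transfer :: "('d \<Rightarrow> nat) \<Rightarrow> 'd \<Rightarrow> 'd \<Rightarrow> 'd \<Rightarrow> nat" where
  "transfer x i j = (depart x i)(j := Suc (x j))"

definition neighbours :: "('d::finite \<Rightarrow> nat) \<Rightarrow> ('d \<Rightarrow> nat) set" where
  "neighbours x = insert x (range (arrive x) \<union> range (depart x) \<union> (\<Union>i. range (transfer x i)))"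

lemma finite_neighbours: "finite (neighbours x)"
  unfolding neighbours_def by auto

lemma neighbours_mem [simp]:
  "x \<in> neighbours x" "arrive x i \<in> neighbours x" "depart x i \<in> neighbours x"
  "transfer x i j \<in> neighbours x"
  unfolding neighbours_def by blast+

lemma jrate_eq_0_outside:
  assumes "z \<notin> neighbours x"
  shows "jrate lam mu P x z = 0"
proof -
  have "z \<noteq> arrive x i" "z \<noteq> depart x i" "z \<noteq> transfer x i j" for i j
    using assms neighbours_mem by metis+
  thus ?thesis unfolding jrate_def by (simp add: arrive_def depart_def transfer_def)
qed

lemma sum_swap_delta:
  assumes "finite J" "finite I" "\<And>i. i \<in> I \<Longrightarrow> a i \<in> J"
  shows "(\<Sum>z\<in>J. \<Sum>i\<in>I. if z = a i then h i z else 0) = (\<Sum>i\<in>I. h i (a i))"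
  by (subst sum.swap) (use assms in \<open>intro sum.cong refl, simp add: sum.delta'\<close>)

lemma sum_neighbours_jrate:
  fixes x :: "'d::finite \<Rightarrow> nat"
  shows "(\<Sum>z\<in>neighbours x. jrate lam mu P x z * g z) =
     (\<Sum>i\<in>UNIV. lam i * g (arrive x i)) +
     (\<Sum>i\<in>UNIV. if 0 < x i then mu i * exit_prob P i * g (depart x i) else 0) +
     (\<Sum>i\<in>UNIV. \<Sum>j\<in>UNIV. if j \<noteq> i \<and> 0 < x i then mu i * P $ i $ j * g (transfer x i j) else 0)"
proof -
  have F: "finite (neighbours x)" by (rule finite_neighbours)
  have jrate_split: "jrate lam mu P x z =
     (\<Sum>i\<in>UNIV. if z = arrive x i then lam i else 0) +
     (\<Sum>i\<in>UNIV. if z = depart x i then (if 0 < x i then mu i * exit_prob P i else 0) else 0) +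
     (\<Sum>i\<in>UNIV. \<Sum>j\<in>UNIV. if z = transfer x i j then
        (if j \<noteq> i \<and> 0 < x i then mu i * P $ i $ j else 0) else 0)" for z
    unfolding jrate_def arrive_def depart_def transfer_def
    by (intro arg_cong2[where f="(+)"] sum.cong refl) auto
  have "(\<Sum>z\<in>neighbours x. jrate lam mu P x z * g z) =
     (\<Sum>z\<in>neighbours x. \<Sum>i\<in>UNIV. if z = arrive x i then lam i * g z else 0) +
     (\<Sum>z\<in>neighbours x. \<Sum>i\<in>UNIV. if z = depart x i then
        (if 0 < x i then mu i * exit_prob P i * g z else 0) else 0) +
     (\<Sum>z\<in>neighbours x. \<Sum>i\<in>UNIV. \<Sum>j\<in>UNIV. if z = transfer x i j then
        (if j \<noteq> i \<and> 0 < x i then mu i * P $ i $ j * g z else 0) else 0)"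
    unfolding jrate_split sum.distrib[symmetric] distrib_right sum_distrib_right
    by (intro sum.cong refl) (auto intro!: sum.cong)
  also have "(\<Sum>z\<in>neighbours x. \<Sum>i\<in>UNIV. \<Sum>j\<in>UNIV. if z = transfer x i j then
        (if j \<noteq> i \<and> 0 < x i then mu i * P $ i $ j * g z else 0) else 0)
     = (\<Sum>i\<in>UNIV. \<Sum>j\<in>UNIV. if j \<noteq> i \<and> 0 < x i then mu i * P $ i $ j * g (transfer x i j) else 0)"
    by (subst sum.swap, intro sum.cong refl sum_swap_delta) (use F in auto)
  finally show ?thesis
    by (subst (asm) (1 2) sum_swap_delta[OF F]) auto
qed

definition generator ::
  "('d::finite \<Rightarrow> real) \<Rightarrow> ('d \<Rightarrow> real) \<Rightarrow> real^'d^'d \<Rightarrow> (('d \<Rightarrow> nat) \<Rightarrow> real) \<Rightarrow> ('d \<Rightarrow> nat) \<Rightarrow> real"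
  where "generator lam mu P g x = (\<Sum>z\<in>neighbours x. jrate lam mu P x z * (g z - g x))"

lemma generator_explicit:
  "generator lam mu P g x =
     (\<Sum>i\<in>UNIV. lam i * (g (arrive x i) - g x)) +
     (\<Sum>i\<in>UNIV. if 0 < x i then mu i * exit_prob P i * (g (depart x i) - g x) else 0) +
     (\<Sum>i\<in>UNIV. \<Sum>j\<in>UNIV. if j \<noteq> i \<and> 0 < x i
        then mu i * P $ i $ j * (g (transfer x i j) - g x) else 0)"
  unfolding generator_def by (rule sum_neighbours_jrate)

lemma generator_sum:
  "generator lam mu P (\<lambda>z. \<Sum>j\<in>A. g j z) x = (\<Sum>j\<in>A. generator lam mu P (g j) x)"
  unfolding generator_def sum_subtractf[symmetric] sum_distrib_left
  by (rule sum.swap)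

lemma exit_prob_nonneg: "jackson_params lam mu P \<Longrightarrow> exit_prob P i \<ge> 0"
  unfolding jackson_params_def exit_prob_def by auto

lemma jrate_nonneg: "jackson_params lam mu P \<Longrightarrow> jrate lam mu P x z \<ge> 0"
  unfolding jrate_def using exit_prob_nonneg[of lam mu P]
  by (intro add_nonneg_nonneg sum_nonneg) (auto simp: jackson_params_def less_imp_le)

lemma unif_const_ge_1: "jackson_params lam mu P \<Longrightarrow> unif_const lam mu \<ge> 1"
  unfolding unif_const_def jackson_params_def by (smt (verit) sum_nonneg)

lemma total_jrate:
  assumes "jackson_params lam mu P"
  shows "(\<Sum>z\<in>neighbours x. jrate lam mu P x z)
           = (\<Sum>i\<in>UNIV. lam i) + (\<Sum>i\<in>UNIV. if 0 < x i then mu i else 0)"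
proof -
  have "P $ i $ i = 0" for i using assms by (simp add: jackson_params_def)
  hence "(\<Sum>j\<in>UNIV. if j \<noteq> i \<and> 0 < x i then mu i * P $ i $ j else 0)
           = (if 0 < x i then mu i * (\<Sum>j\<in>UNIV. P $ i $ j) else 0)" for i
    by (auto simp: sum_distrib_left intro!: sum.cong)
  hence "(\<Sum>z\<in>neighbours x. jrate lam mu P x z) = (\<Sum>i\<in>UNIV. lam i) +
     (\<Sum>i\<in>UNIV. (if 0 < x i then mu i * exit_prob P i else 0)
                + (if 0 < x i then mu i * (\<Sum>j\<in>UNIV. P $ i $ j) else 0))"
    using sum_neighbours_jrate[of lam mu P x "\<lambda>_. 1"] by (simp add: sum.distrib)
  also have "\<dots> = (\<Sum>i\<in>UNIV. lam i) + (\<Sum>i\<in>UNIV. if 0 < x i then mu i else 0)"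
    by (intro arg_cong2[where f="(+)"] sum.cong refl) (auto simp: exit_prob_def algebra_simps)
  finally show ?thesis .
qed

lemma total_jrate_le:
  assumes "jackson_params lam mu P"
  shows "(\<Sum>z\<in>neighbours x. jrate lam mu P x z) \<le> unif_const lam mu - 1"
proof -
  have "(\<Sum>i\<in>UNIV. if 0 < x i then mu i else 0) \<le> (\<Sum>i\<in>UNIV. mu i)"
    using assms by (intro sum_mono) (auto simp: jackson_params_def less_imp_le)
  thus ?thesis by (simp add: total_jrate[OF assms] unif_const_def)
qed

lemma infsum_jrate: "(\<Sum>\<^sub>\<infinity>z. jrate lam mu P x z) = (\<Sum>z\<in>neighbours x. jrate lam mu P x z)"
proof -
  have "(\<Sum>\<^sub>\<infinity>z. jrate lam mu P x z) = infsum (jrate lam mu P x) (neighbours x)"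
    by (rule infsum_cong_neutral) (auto simp: jrate_eq_0_outside)
  thus ?thesis by (simp add: finite_neighbours)
qed

lemma unif_kernel_eq_0_outside: "z \<notin> neighbours x \<Longrightarrow> unif_kernel lam mu P x z = 0"
  unfolding unif_kernel_def by (auto simp: jrate_eq_0_outside)

lemma unif_kernel_nonneg:
  assumes "jackson_params lam mu P"
  shows "unif_kernel lam mu P x z \<ge> 0"
proof -
  have "(\<Sum>z\<in>neighbours x. jrate lam mu P x z) \<le> unif_const lam mu"
    using total_jrate_le[OF assms, of x] by linarith
  hence "(\<Sum>\<^sub>\<infinity>z. jrate lam mu P x z) / unif_const lam mu \<le> 1"
    using unif_const_ge_1[OF assms] by (simp add: infsum_jrate)
  thus ?thesis
    unfolding unif_kernel_def using jrate_nonneg[OF assms] unif_const_ge_1[OF assms]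
    by (intro add_nonneg_nonneg) auto
qed

lemma infsum_unif_kernel:
  "(\<Sum>\<^sub>\<infinity>z. unif_kernel lam mu P x z * g z) = (\<Sum>z\<in>neighbours x. unif_kernel lam mu P x z * g z)"
proof -
  have "(\<Sum>\<^sub>\<infinity>z. unif_kernel lam mu P x z * g z)
          = infsum (\<lambda>z. unif_kernel lam mu P x z * g z) (neighbours x)"
    by (rule infsum_cong_neutral) (auto simp: unif_kernel_eq_0_outside)
  thus ?thesis by (simp add: finite_neighbours)
qed

lemma infsum_unif_kernel_generator:
  "(\<Sum>\<^sub>\<infinity>z. unif_kernel lam mu P x z * g z)
     = g x + generator lam mu P g x / unif_const lam mu"
proof -
  let ?c = "unif_const lam mu" and ?N = "neighbours x"
  have "(\<Sum>z\<in>?N. unif_kernel lam mu P x z * g z)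
     = (\<Sum>z\<in>?N. jrate lam mu P x z * g z / ?c
          + (if z = x then (1 - (\<Sum>z\<in>?N. jrate lam mu P x z) / ?c) * g x else 0))"
    by (intro sum.cong refl) (auto simp: unif_kernel_def infsum_jrate distrib_right)
  also have "\<dots> = g x + (\<Sum>z\<in>?N. jrate lam mu P x z * g z) / ?c
                    - (\<Sum>z\<in>?N. jrate lam mu P x z) / ?c * g x"
    by (simp add: sum.distrib sum_divide_distrib[symmetric] finite_neighbours sum.delta' algebra_simps)
  also have "\<dots> = g x + generator lam mu P g x / ?c"
    by (simp add: generator_def right_diff_distrib sum_subtractf sum_distrib_right
        sum_distrib_left diff_divide_distrib algebra_simps)
  finally show ?thesis by (simp add: infsum_unif_kernel)
qed

lemma generator_const: "generator lam mu P (\<lambda>_. c) x = 0"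
  by (simp add: generator_def)

lemma taboo_pow_nonneg:
  assumes "jackson_params lam mu P"
  shows "taboo_pow lam mu P E n x y \<ge> 0"
proof (induction n arbitrary: x)
  case (Suc n)
  show ?case
    by (simp, rule infsum_nonneg) (use Suc unif_kernel_nonneg[OF assms] in auto)
qed simp

lemma taboo_pow_drift_bound:
  fixes f :: "('d::finite \<Rightarrow> nat) \<Rightarrow> real"
  assumes jp: "jackson_params lam mu P" and f_pos: "\<And>z. f z > 0" and \<rho>: "\<rho> \<ge> 0"
    and drift: "\<And>x. x \<notin> E \<Longrightarrow> (\<Sum>\<^sub>\<infinity>z. unif_kernel lam mu P x z * f z) \<le> \<rho> * f x"
    and x: "x \<notin> E"
  shows "taboo_pow lam mu P E n x y * f y \<le> \<rho> ^ n * f x"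
  using x
proof (induction n arbitrary: x)
  case 0 thus ?case using f_pos[of x] by (auto simp: less_imp_le)
next
  case (Suc n)
  have "taboo_pow lam mu P E (Suc n) x y * f y =
     (\<Sum>z\<in>neighbours x. unif_kernel lam mu P x z * ((if z \<in> E then 0 else taboo_pow lam mu P E n z y) * f y))"
    by (simp add: infsum_unif_kernel sum_distrib_right mult.assoc)
  also have "\<dots> \<le> (\<Sum>z\<in>neighbours x. unif_kernel lam mu P x z * (\<rho> ^ n * f z))"
    using Suc.IH f_pos \<rho>
    by (intro sum_mono mult_left_mono unif_kernel_nonneg[OF jp])
      (auto intro!: mult_nonneg_nonneg simp: less_imp_le)
  also have "\<dots> = \<rho> ^ n * (\<Sum>\<^sub>\<infinity>z. unif_kernel lam mu P x z * f z)"
    unfolding infsum_unif_kernel sum_distrib_left by (simp add: algebra_simps)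
  also have "\<dots> \<le> \<rho> ^ n * (\<rho> * f x)"
    using drift[OF Suc.prems] \<rho> by (simp add: mult_left_mono)
  also have "\<dots> = \<rho> ^ Suc n * f x"
    by simp
  finally show ?case .
qed

lemma taboo_pow_le_1:
  assumes jp: "jackson_params lam mu P"
  shows "taboo_pow lam mu P E n x y \<le> 1"
proof (induction n arbitrary: x)
  case (Suc n)
  have "taboo_pow lam mu P E (Suc n) x y \<le> (\<Sum>\<^sub>\<infinity>z. unif_kernel lam mu P x z * 1)"
    unfolding taboo_pow.simps infsum_unif_kernel
    using Suc.IH by (intro sum_mono mult_left_mono unif_kernel_nonneg[OF jp]) auto
  thus ?case by (simp add: infsum_unif_kernel_generator[of _ _ _ _ "\<lambda>_. 1", simplified] generator_const)
qed simp

lemma poisson_sums: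
  fixes s \<rho> :: real
  shows "(\<lambda>n. exp (- s) * s ^ n / fact n * \<rho> ^ n) sums (exp (- s) * exp (s * \<rho>))"
proof -
  have "(\<lambda>n. exp (- s) * ((s * \<rho>) ^ n /\<^sub>R fact n)) sums (exp (- s) * exp (s * \<rho>))"
    by (intro sums_mult exp_converges)
  thus ?thesis by (simp add: power_mult_distrib divide_inverse algebra_simps)
qed

lemma poisson_mixture_le:
  fixes s \<rho> K :: real
  assumes s: "s \<ge> 0" and b: "\<And>n. 0 \<le> b n" "\<And>n. b n \<le> K * \<rho> ^ n"
  defines "w \<equiv> \<lambda>n. exp (- s) * s ^ n / fact n"
  shows "summable (\<lambda>n. w n * b n)" and "(\<Sum>n. w n * b n) \<le> K * exp (- (s * (1 - \<rho>)))"
proof -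
  have w: "w n \<ge> 0" for n unfolding w_def using s by simp
  have major: "(\<lambda>n. K * (w n * \<rho> ^ n)) sums (K * (exp (- s) * exp (s * \<rho>)))"
    unfolding w_def by (intro sums_mult poisson_sums)
  have le: "w n * b n \<le> K * (w n * \<rho> ^ n)" for n
    using mult_left_mono[OF b(2) w] by (simp add: algebra_simps)
  show sa: "summable (\<lambda>n. w n * b n)"
    by (rule summable_comparison_test'[OF sums_summable[OF major], of 0])
      (use w b(1) le in auto)
  have "(\<Sum>n. w n * b n) \<le> K * (exp (- s) * exp (s * \<rho>))"
    using suminf_le[OF le sa sums_summable[OF major]] sums_unique[OF major] by simp
  thus "(\<Sum>n. w n * b n) \<le> K * exp (- (s * (1 - \<rho>)))"
    by (simp add: exp_add[symmetric] algebra_simps)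
qed

lemma taboo_prob_le:
  fixes f :: "('d::finite \<Rightarrow> nat) \<Rightarrow> real"
  assumes jp: "jackson_params lam mu P" and f_pos: "\<And>z. f z > 0" and \<rho>: "\<rho> \<ge> 0"
    and drift: "\<And>x. x \<notin> E \<Longrightarrow> (\<Sum>\<^sub>\<infinity>z. unif_kernel lam mu P x z * f z) \<le> \<rho> * f x"
    and x: "x \<notin> E" and t: "t \<ge> 0"
  shows "taboo_prob lam mu P E t x y \<le> f x / f y * exp (- (unif_const lam mu * (1 - \<rho>)) * t)"
proof -
  have "taboo_pow lam mu P E n x y \<le> f x / f y * \<rho> ^ n" for n
    using taboo_pow_drift_bound[OF jp f_pos \<rho> drift x, of n y] f_pos[of y]
    by (simp add: field_simps)
  from poisson_mixture_le(2)[of "unif_const lam mu * t", OF _ taboo_pow_nonneg[OF jp] this]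
  show ?thesis
    using unif_const_ge_1[OF jp] t unfolding taboo_prob_def by (simp add: algebra_simps)
qed

lemma taboo_prob_summable:
  assumes jp: "jackson_params lam mu P" and t: "t \<ge> 0"
  shows "summable (\<lambda>n. exp (- unif_const lam mu * t) * (unif_const lam mu * t) ^ n / fact n
                         * taboo_pow lam mu P E n x y)"
  using poisson_mixture_le(1)[of "unif_const lam mu * t" "\<lambda>n. taboo_pow lam mu P E n x y" 1 1]
    taboo_pow_nonneg[OF jp] taboo_pow_le_1[OF jp] unif_const_ge_1[OF jp] t
  by simp

lemma taboo_prob_diag_ge:
  assumes "jackson_params lam mu P" and "t \<ge> 0"
  shows "taboo_prob lam mu P E t x x \<ge> exp (- unif_const lam mu * t)"
proof -
  have "(\<Sum>n<1. exp (- unif_const lam mu * t) * (unif_const lam mu * t) ^ n / fact n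
                 * taboo_pow lam mu P E n x x) \<le> taboo_prob lam mu P E t x x"
    unfolding taboo_prob_def
    using assms unif_const_ge_1[OF assms(1)] taboo_pow_nonneg[OF assms(1)]
    by (intro sum_le_suminf taboo_prob_summable) auto
  thus ?thesis by simp
qed

lemma emeasure_lborel_atLeast: "emeasure lborel {a::real..} = \<infinity>"
proof (rule ccontr)
  assume "emeasure lborel {a..} \<noteq> \<infinity>"
  then obtain v where v: "emeasure lborel {a..} = ennreal v" "v \<ge> 0"
    using ennreal_cases[of "emeasure lborel {a..}"] by auto
  obtain n :: nat where n: "real n > v" using reals_Archimedean2 by blast
  have "emeasure lborel {a..a + real n} \<le> emeasure lborel {a..}"
    by (intro emeasure_mono) auto
  with v n show False by (simp add: ennreal_le_iff2)
qed

lemma nn_integral_powr_exp_decay_finite: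
  fixes h :: "real \<Rightarrow> real"
  assumes r: "r > 0" and decay: "m + ln r > 0" and A: "A \<ge> 0"
    and h: "\<And>t. t \<ge> 0 \<Longrightarrow> h t \<le> A * exp (- m * t)"
  shows "(\<integral>\<^sup>+ t\<in>{0..}. ennreal (r powr (- t) * h t) \<partial>lborel) < \<infinity>"
proof -
  define l where "l = m + ln r"
  have "(\<integral>\<^sup>+ t\<in>{0..}. ennreal (r powr (- t) * h t) \<partial>lborel)
      \<le> (\<integral>\<^sup>+ t. ennreal (A / l) * ennreal (erlang_density 0 l t) \<partial>lborel)"
  proof (intro nn_integral_mono)
    fix t :: real
    show "ennreal (r powr - t * h t) * indicator {0..} t
            \<le> ennreal (A / l) * ennreal (erlang_density 0 l t)"
    proof (cases "t \<ge> 0")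
      case True
      have "r powr - t * h t \<le> r powr - t * (A * exp (- m * t))"
        using h[OF True] by (intro mult_left_mono) auto
      also have "\<dots> = A / l * (l * exp (- l * t))"
        using r decay by (simp add: powr_def l_def exp_add[symmetric] field_simps)
      finally show ?thesis
        using True decay A by (simp add: erlang_density_def ennreal_mult[symmetric] l_def)
    qed simp
  qed
  also have "\<dots> = ennreal (A / l) * (\<integral>\<^sup>+ t. ennreal (erlang_density 0 l t) \<partial>lborel)"
    by (rule nn_integral_cmult) simp
  also have "\<dots> = ennreal (A / l)"
    using nn_integral_erlang_ith_moment[of l 0 0] decay by (simp add: l_def)
  finally show ?thesis by (simp add: order_le_less_trans)
qed

lemma nn_integral_powr_exp_growth_infinite:
  fixes h :: "real \<Rightarrow> real"
  assumes r: "r > 0" "ln r \<le> - c" and h: "\<And>t. t \<ge> 0 \<Longrightarrow> h t \<ge> exp (- c * t)"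
  shows "(\<integral>\<^sup>+ t\<in>{0..}. ennreal (r powr (- t) * h t) \<partial>lborel) = \<infinity>"
proof -
  have "(\<integral>\<^sup>+ t. indicator {0::real..} t \<partial>lborel)
          \<le> (\<integral>\<^sup>+ t\<in>{0..}. ennreal (r powr (- t) * h t) \<partial>lborel)"
  proof (intro nn_integral_mono)
    fix t :: real
    show "indicator {0..} t \<le> ennreal (r powr - t * h t) * indicator {0..} t"
    proof (cases "t \<ge> 0")
      case True
      have "c * t \<le> - (t * ln r)"
        using mult_left_mono[OF r(2) True] by (simp add: algebra_simps)
      hence "1 \<le> exp (- t * ln r) * exp (- c * t)"
        by (simp add: exp_add[symmetric] algebra_simps)
      also have "\<dots> \<le> r powr - t * h t"
        using r h[OF True] by (simp add: powr_def)
      finally show ?thesis using True by simp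
    qed simp
  qed
  thus ?thesis using emeasure_lborel_atLeast by (simp add: top_unique)
qed

lemma hit_nonneg: "jackson_params lam mu P \<Longrightarrow> hit P n i j \<ge> 0"
proof (induction n arbitrary: i)
  case (Suc n) thus ?case
    by (auto intro!: sum_nonneg mult_nonneg_nonneg simp: jackson_params_def)
qed simp

lemma sum_hit_le_1:
  assumes jp: "jackson_params lam mu P"
  shows "(\<Sum>n<N. hit P n i j) \<le> 1"
proof (induction N arbitrary: i)
  case (Suc N)
  show ?case
  proof (cases "i = j")
    case False
    have "(\<Sum>n<Suc N. hit P n i j) = (\<Sum>k\<in>UNIV. P $ i $ k * (\<Sum>n<N. hit P n k j))"
      using False unfolding sum.lessThan_Suc_shift
      by (simp add: sum.swap[of _ "{..<N}"] sum_distrib_left)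
    also have "\<dots> \<le> (\<Sum>k\<in>UNIV. P $ i $ k)"
      using Suc.IH jp hit_nonneg[OF jp]
      by (intro sum_mono mult_right_le_one_le sum_nonneg) (auto simp: jackson_params_def)
    also have "\<dots> \<le> 1" using jp by (simp add: jackson_params_def)
    finally show ?thesis .
  qed (unfold sum.lessThan_Suc_shift, simp)
qed simp

lemma summable_hit:
  assumes "jackson_params lam mu P"
  shows "summable (\<lambda>n. hit P n i j)"
  by (rule summableI_nonneg_bounded[of _ 1]) (use hit_nonneg[OF assms] sum_hit_le_1[OF assms] in auto)

lemma Qhit_nonneg: "jackson_params lam mu P \<Longrightarrow> Qhit P i j \<ge> 0"
  unfolding Qhit_def by (intro suminf_nonneg summable_hit) (auto intro: hit_nonneg)

lemma Qhit_same [simp]: "Qhit P j j = 1"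
proof -
  have "hit P n j j = (if n = 0 then 1 else 0)" for n
    by (cases n) auto
  hence "(\<lambda>n. hit P n j j) = (\<lambda>n. if n = 0 then 1 else 0)"
    by auto
  thus ?thesis
    unfolding Qhit_def using sums_single[of 0 "\<lambda>_. 1::real"] by (simp add: sums_iff)
qed

lemma Qhit_step:
  assumes jp: "jackson_params lam mu P" and ij: "i \<noteq> j"
  shows "Qhit P i j = (\<Sum>k\<in>UNIV. P $ i $ k * Qhit P k j)"
proof -
  have "Qhit P i j = hit P 0 i j + (\<Sum>n. hit P (Suc n) i j)"
    unfolding Qhit_def using suminf_split_head[OF summable_hit[OF jp, of i j]] by simp
  also have "\<dots> = (\<Sum>n. \<Sum>k\<in>UNIV. P $ i $ k * hit P n k j)"
    using ij by simp
  also have "\<dots> = (\<Sum>k\<in>UNIV. \<Sum>n. P $ i $ k * hit P n k j)"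
    by (intro suminf_sum summable_mult summable_hit[OF jp])
  also have "\<dots> = (\<Sum>k\<in>UNIV. P $ i $ k * Qhit P k j)"
    unfolding Qhit_def by (intro sum.cong refl suminf_mult summable_hit[OF jp])
  finally show ?thesis .
qed

lemma sum_harmonic_pairing:
  fixes u w c :: "'d::finite \<Rightarrow> real"
  assumes u: "\<And>k. k \<noteq> j \<Longrightarrow> u k = (\<Sum>l\<in>UNIV. P $ k $ l * u l)"
    and w: "\<And>l. w l = c l + (\<Sum>k\<in>UNIV. w k * P $ k $ l)"
  shows "(\<Sum>l\<in>UNIV. c l * u l) = w j * (u j - (\<Sum>l\<in>UNIV. P $ j $ l * u l))"
proof -
  have "(\<Sum>l\<in>UNIV. c l * u l)
          = (\<Sum>l\<in>UNIV. w l * u l) - (\<Sum>l\<in>UNIV. \<Sum>k\<in>UNIV. w k * P $ k $ l * u l)"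
    by (subst w) (simp add: algebra_simps sum.distrib sum_subtractf sum_distrib_right sum_distrib_left)
  also have "\<dots> = (\<Sum>k\<in>UNIV. w k * (u k - (\<Sum>l\<in>UNIV. P $ k $ l * u l)))"
    by (subst sum.swap) (simp add: algebra_simps sum_subtractf sum_distrib_left)
  also have "\<dots> = (\<Sum>k\<in>UNIV. if k = j then w j * (u j - (\<Sum>l\<in>UNIV. P $ j $ l * u l)) else 0)"
    by (intro sum.cong refl) (auto simp: u)
  finally show ?thesis by simp
qed

definition return_prob :: "real^'d^'d \<Rightarrow> 'd::finite \<Rightarrow> real" where
  "return_prob P j = (\<Sum>l\<in>UNIV. P $ j $ l * Qhit P l j)"

lemma traffic_Qhit:
  assumes "jackson_params lam mu P" and "traffic lam P nu"
  shows "(\<Sum>l\<in>UNIV. lam l * Qhit P l j) = nu j * (1 - return_prob P j)"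
proof -
  have "(\<Sum>l\<in>UNIV. lam l * Qhit P l j)
          = nu j * (Qhit P j j - (\<Sum>l\<in>UNIV. P $ j $ l * Qhit P l j))"
    by (rule sum_harmonic_pairing[of j "\<lambda>l. Qhit P l j" P nu lam])
      (erule Qhit_step[OF assms(1)], use assms(2) in \<open>unfold traffic_def, blast\<close>)
  thus ?thesis by (simp add: return_prob_def)
qed

lemma max_abs_fixed_vector_closed:
  fixes P :: "real^'d::finite^'d" and x :: "'d \<Rightarrow> real"
  assumes P_nonneg: "\<And>i j. P $ i $ j \<ge> 0" and P_sub: "\<And>i. (\<Sum>j\<in>UNIV. P $ i $ j) \<le> 1"
    and fixed: "x k = (\<Sum>l\<in>UNIV. P $ k $ l * x l)"
    and max: "\<And>l. \<bar>x l\<bar> \<le> \<bar>x k\<bar>" and nz: "x k \<noteq> 0"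
  shows "(\<Sum>l\<in>UNIV. P $ k $ l) = 1" and "P $ k $ l > 0 \<Longrightarrow> \<bar>x l\<bar> = \<bar>x k\<bar>"
proof -
  let ?M = "\<bar>x k\<bar>"
  have A: "?M \<le> (\<Sum>l\<in>UNIV. P $ k $ l * \<bar>x l\<bar>)"
    using fixed sum_abs[of "\<lambda>l. P $ k $ l * x l" UNIV] by (simp add: abs_mult P_nonneg)
  have B: "(\<Sum>l\<in>UNIV. P $ k $ l * \<bar>x l\<bar>) \<le> (\<Sum>l\<in>UNIV. P $ k $ l * ?M)"
    by (intro sum_mono mult_left_mono max P_nonneg)
  have C: "(\<Sum>l\<in>UNIV. P $ k $ l * ?M) \<le> ?M"
    unfolding sum_distrib_right[symmetric]
    by (rule mult_left_le_one_le) (auto intro: sum_nonneg P_nonneg P_sub)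
  have eq: "(\<Sum>l\<in>UNIV. P $ k $ l * \<bar>x l\<bar>) = ?M" "(\<Sum>l\<in>UNIV. P $ k $ l * ?M) = ?M"
    using A B C by linarith+
  from eq(2) nz show "(\<Sum>l\<in>UNIV. P $ k $ l) = 1"
    by (simp add: sum_distrib_right[symmetric])
  have "(\<Sum>l\<in>UNIV. P $ k $ l * (?M - \<bar>x l\<bar>)) = 0"
    using eq by (simp add: algebra_simps sum_subtractf)
  hence "P $ k $ l * (?M - \<bar>x l\<bar>) = 0"
    by (subst (asm) sum_nonneg_eq_0_iff) (auto intro!: mult_nonneg_nonneg P_nonneg simp: max)
  thus "P $ k $ l > 0 \<Longrightarrow> \<bar>x l\<bar> = ?M" by simp
qed

text \<open>The number of customers in a closed set S never decreases along the free walk,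
  so (A) forbids reaching -e_k for k in S.\<close>

lemma hypA_no_closed_set:
  fixes S :: "'d::finite set"
  assumes jp: "jackson_params lam mu P" and hA: "hypA lam mu P"
    and closed: "\<And>k l. k \<in> S \<Longrightarrow> exit_prob P k = 0 \<and> (P $ k $ l > 0 \<longrightarrow> l \<in> S)"
  shows "S = {}"
proof (rule ccontr)
  assume "S \<noteq> {}"
  then obtain k0 where k0: "k0 \<in> S" by blast
  define V where "V z = (\<Sum>k\<in>S. z k)" for z :: "'d \<Rightarrow> int"
  have sum_unitz: "(\<Sum>k\<in>S. unitz i k) = (if i \<in> S then 1 else 0)" for i
    by (simp add: unitz_def sum.delta')
  have step: "V z \<le> V y" if "free_step lam mu P z y" for z y
  proof -
    from that obtain i where
      "(lam i > 0 \<and> y = (\<lambda>k. z k + unitz i k)) \<or>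
       (mu i * exit_prob P i > 0 \<and> y = (\<lambda>k. z k - unitz i k)) \<or>
       (\<exists>j. mu i * P $ i $ j > 0 \<and> y = (\<lambda>k. z k - unitz i k + unitz j k))"
      unfolding free_step_def by blast
    moreover have "mu i > 0" using jp by (simp add: jackson_params_def)
    ultimately show ?thesis
    proof (elim disjE conjE exE)
      assume "y = (\<lambda>k. z k + unitz i k)"
      thus ?thesis by (simp add: V_def sum.distrib sum_unitz)
    next
      assume "mu i > 0" "mu i * exit_prob P i > 0" "y = (\<lambda>k. z k - unitz i k)"
      moreover from this have "i \<notin> S" using closed[of i] by (auto simp: zero_less_mult_iff)
      ultimately show ?thesis by (simp add: V_def sum_subtractf sum_unitz)
    next
      fix j assume "mu i > 0" "mu i * P $ i $ j > 0" "y = (\<lambda>k. z k - unitz i k + unitz j k)"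
      moreover from this have "i \<in> S \<longrightarrow> j \<in> S" using closed[of i j] by (auto simp: zero_less_mult_iff)
      ultimately show ?thesis by (simp add: V_def sum.distrib sum_subtractf sum_unitz)
    qed
  qed
  have mono: "V z \<le> V y" if "(free_step lam mu P)\<^sup>*\<^sup>* z y" for z y
    using that by (induction rule: rtranclp_induct) (auto dest: step)
  have "V (\<lambda>_. 0) \<le> V (\<lambda>k. - unitz k0 k)"
    using hA unfolding hypA_def by (intro mono) blast
  with k0 show False by (simp add: V_def sum_negf sum_unitz)
qed

lemma fixed_vector_eq_0:
  assumes jp: "jackson_params lam mu P" and hA: "hypA lam mu P"
    and fixed: "\<And>k. x k = (\<Sum>l\<in>UNIV. P $ k $ l * x l)"
  shows "x = (\<lambda>_. 0)"
proof (rule ccontr)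
  assume x_nz: "x \<noteq> (\<lambda>_. 0)"
  have "Max (range (\<lambda>l. \<bar>x l\<bar>)) \<in> range (\<lambda>l. \<bar>x l\<bar>)"
    by (rule Max_in) auto
  then obtain k0 where k0: "Max (range (\<lambda>l. \<bar>x l\<bar>)) = \<bar>x k0\<bar>" by blast
  have max: "\<bar>x l\<bar> \<le> \<bar>x k0\<bar>" for l
    unfolding k0[symmetric] by (rule Max_ge) auto
  have nz: "x k0 \<noteq> 0"
  proof
    assume "x k0 = 0"
    hence "x l = 0" for l using max[of l] by simp
    with x_nz show False by auto
  qed
  let ?S = "{k. \<bar>x k\<bar> = \<bar>x k0\<bar>}"
  have "?S = {}"
  proof (rule hypA_no_closed_set[OF jp hA])
    fix k l assume k: "k \<in> ?S"
    hence max_k: "\<bar>x l\<bar> \<le> \<bar>x k\<bar>" for l using max by simp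
    have nz_k: "x k \<noteq> 0" using k nz by auto
    have P: "\<And>i j. P $ i $ j \<ge> 0" "\<And>i. (\<Sum>j\<in>UNIV. P $ i $ j) \<le> 1"
      using jp by (auto simp: jackson_params_def)
    note closed = max_abs_fixed_vector_closed[of P x k, OF P fixed max_k nz_k]
    show "exit_prob P k = 0 \<and> (P $ k $ l > 0 \<longrightarrow> l \<in> ?S)"
      using closed(1) closed(2)[of l] k by (simp add: exit_prob_def)
  qed
  thus False by auto
qed

lemma invertible_I_minus_P:
  fixes P :: "real^'d::finite^'d"
  assumes "jackson_params lam mu P" and "hypA lam mu P"
  shows "invertible (mat 1 - P)"
proof -
  have "x = 0" if "(mat 1 - P) *v x = 0" for x :: "real^'d"
  proof -
    have "x $ k = (\<Sum>l\<in>UNIV. P $ k $ l * x $ l)" for k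
    proof -
      have "(\<Sum>l\<in>UNIV. x $ l * (if k = l then 1 else 0)) = (\<Sum>l\<in>UNIV. x $ l * P $ k $ l)"
        using that by (simp add: vec_eq_iff matrix_vector_mult_def mat_def algebra_simps sum_subtractf)
      moreover have "(\<Sum>l\<in>UNIV. x $ l * (if k = l then 1 else 0)) = x $ k"
        by (simp add: if_distrib[of "\<lambda>a. _ * a"] cong: if_cong)
      ultimately show ?thesis by (simp add: mult.commute)
    qed
    from fixed_vector_eq_0[OF assms, of "\<lambda>k. x $ k", OF this] show ?thesis
      by (simp add: vec_eq_iff fun_eq_iff)
  qed
  hence "\<exists>B :: real^'d^'d. B ** (mat 1 - P) = mat 1"
    by (subst matrix_left_invertible_ker) blast
  thus ?thesis by (simp add: invertible_left_inverse)
qed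

lemma Gmat_diag_return_prob:
  assumes jp: "jackson_params lam mu P" and hA: "hypA lam mu P"
  shows "Gmat P $ j $ j * (1 - return_prob P j) = 1"
proof -
  have "Gmat P ** (mat 1 - P) = mat 1"
    unfolding Gmat_def matrix_inv_def
    by (rule someI2_ex) (use invertible_I_minus_P[OF assms] in \<open>auto simp: invertible_def\<close>)
  hence "(\<Sum>k\<in>UNIV. Gmat P $ j $ k * ((if k = l then 1 else 0) - P $ k $ l)) = (if j = l then 1 else 0)"
    for l by (simp add: matrix_matrix_mult_def mat_def vec_eq_iff)
  hence G_eq: "Gmat P $ j $ l - (\<Sum>k\<in>UNIV. Gmat P $ j $ k * P $ k $ l) = (if j = l then 1 else 0)" for l
    by (simp add: right_diff_distrib sum_subtractf if_distrib[of "\<lambda>a. _ * a"] cong: if_cong)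
  have G_row: "Gmat P $ j $ l = (if j = l then 1 else 0) + (\<Sum>k\<in>UNIV. Gmat P $ j $ k * P $ k $ l)" for l
    using G_eq[of l] by linarith
  have "(\<Sum>l\<in>UNIV. (if j = l then 1 else 0) * Qhit P l j)
          = Gmat P $ j $ j * (Qhit P j j - return_prob P j)"
    unfolding return_prob_def
    by (rule sum_harmonic_pairing[of j "\<lambda>l. Qhit P l j" P "\<lambda>l. Gmat P $ j $ l"])
      (erule Qhit_step[OF jp], rule G_row)
  thus ?thesis by (simp add: if_distrib[of "\<lambda>a. a * _"] cong: if_cong)
qed

definition lyap_base :: "real^'d^'d \<Rightarrow> ('d::finite \<Rightarrow> real) \<Rightarrow> 'd \<Rightarrow> 'd \<Rightarrow> real" where
  "lyap_base P \<gamma> j i = 1 + Qhit P i j * \<gamma> j"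

definition lyap_comp :: "real^'d^'d \<Rightarrow> ('d::finite \<Rightarrow> real) \<Rightarrow> 'd \<Rightarrow> ('d \<Rightarrow> nat) \<Rightarrow> real" where
  "lyap_comp P \<gamma> j x = exp (\<Sum>k\<in>UNIV. gvec P \<gamma> j k * real (x k))"

definition lyap_fun :: "real^'d^'d \<Rightarrow> ('d::finite \<Rightarrow> real) \<Rightarrow> ('d \<Rightarrow> nat) \<Rightarrow> real" where
  "lyap_fun P \<gamma> x = (\<Sum>j\<in>UNIV. lyap_comp P \<gamma> j x)"

lemma lyap_comp_pos: "lyap_comp P \<gamma> j x > 0"
  by (simp add: lyap_comp_def)

lemma lyap_fun_pos: "lyap_fun P \<gamma> x > 0"
  unfolding lyap_fun_def by (rule sum_pos) (auto simp: lyap_comp_pos)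

lemma lyap_comp_le_lyap_fun: "lyap_comp P \<gamma> j x \<le> lyap_fun P \<gamma> x"
  unfolding lyap_fun_def by (rule member_le_sum) (auto simp: less_imp_le[OF lyap_comp_pos])

lemma lyap_base_pos:
  assumes "jackson_params lam mu P" and "\<And>i. \<gamma> i \<ge> 0"
  shows "lyap_base P \<gamma> j i > 0"
  unfolding lyap_base_def using Qhit_nonneg[OF assms(1)] assms(2)
  by (smt (verit) mult_nonneg_nonneg)

lemma sum_mult_fun_upd:
  fixes g :: "'d::finite \<Rightarrow> real"
  shows "(\<Sum>k\<in>UNIV. g k * real ((x(i := v)) k))
           = (\<Sum>k\<in>UNIV. g k * real (x k)) + g i * (real v - real (x i))"
proof -
  have "(\<Sum>k\<in>UNIV. g k * real ((x(i := v)) k))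
          = (\<Sum>k\<in>UNIV. g k * real (x k) + (if k = i then g i * (real v - real (x i)) else 0))"
    by (intro sum.cong) (auto simp: algebra_simps)
  thus ?thesis by (simp add: sum.distrib)
qed

context
  fixes lam mu :: "'d::finite \<Rightarrow> real" and P :: "real^'d^'d" and \<gamma> :: "'d \<Rightarrow> real"
  assumes jp: "jackson_params lam mu P" and \<gamma>_nonneg: "\<And>i. \<gamma> i \<ge> 0"
begin

lemma lyap_comp_arrive: "lyap_comp P \<gamma> j (arrive x i) = lyap_comp P \<gamma> j x * lyap_base P \<gamma> j i"
  using lyap_base_pos[OF jp \<gamma>_nonneg]
  unfolding lyap_comp_def arrive_def sum_mult_fun_upd gvec_def lyap_base_def[symmetric]
  by (simp add: exp_add)

lemma lyap_comp_depart:
  assumes "0 < x i"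
  shows "lyap_comp P \<gamma> j (depart x i) = lyap_comp P \<gamma> j x / lyap_base P \<gamma> j i"
  using lyap_base_pos[OF jp \<gamma>_nonneg] assms
  unfolding lyap_comp_def depart_def sum_mult_fun_upd gvec_def lyap_base_def[symmetric]
  by (simp add: of_nat_diff exp_add exp_diff exp_minus field_simps)

lemma lyap_comp_transfer:
  assumes "0 < x i" "l \<noteq> i"
  shows "lyap_comp P \<gamma> j (transfer x i l)
           = lyap_comp P \<gamma> j x * lyap_base P \<gamma> j l / lyap_base P \<gamma> j i"
  using lyap_base_pos[OF jp \<gamma>_nonneg] assms
  unfolding lyap_comp_def transfer_def depart_def sum_mult_fun_upd gvec_def lyap_base_def[symmetric]
  by (simp add: of_nat_diff exp_add exp_diff exp_minus field_simps)

text \<open>Only i = j contributes, because Q_{ij} is harmonic in i away from j.\<close>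

lemma service_increment:
  "exit_prob P i * (1 / lyap_base P \<gamma> j i - 1)
     + (\<Sum>l\<in>UNIV. P $ i $ l * (lyap_base P \<gamma> j l / lyap_base P \<gamma> j i - 1))
   = (if i = j then - \<gamma> j * (1 - return_prob P j) / (1 + \<gamma> j) else 0)"
proof -
  define A where "A = lyap_base P \<gamma> j i"
  have A: "A > 0" unfolding A_def by (rule lyap_base_pos[OF jp \<gamma>_nonneg])
  have "(\<Sum>l\<in>UNIV. P $ i $ l * (lyap_base P \<gamma> j l / A - 1))
          = (\<Sum>l\<in>UNIV. P $ i $ l * lyap_base P \<gamma> j l) / A - (\<Sum>l\<in>UNIV. P $ i $ l)"
    by (simp add: right_diff_distrib sum_subtractf sum_divide_distrib)
  moreover have "exit_prob P i + (\<Sum>l\<in>UNIV. P $ i $ l * lyap_base P \<gamma> j l)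
                   = 1 + \<gamma> j * (\<Sum>l\<in>UNIV. P $ i $ l * Qhit P l j)"
    by (simp add: exit_prob_def lyap_base_def algebra_simps sum.distrib sum_distrib_left)
  ultimately have E: "exit_prob P i * (1 / A - 1) + (\<Sum>l\<in>UNIV. P $ i $ l * (lyap_base P \<gamma> j l / A - 1))
                        = (1 + \<gamma> j * (\<Sum>l\<in>UNIV. P $ i $ l * Qhit P l j)) / A - 1"
    using A by (simp add: exit_prob_def field_simps)
  show ?thesis
  proof (cases "i = j")
    case True
    hence "A = 1 + \<gamma> j" by (simp add: A_def lyap_base_def)
    thus ?thesis using E True A unfolding A_def return_prob_def by (simp add: field_simps)
  next
    case False
    hence "1 + \<gamma> j * (\<Sum>l\<in>UNIV. P $ i $ l * Qhit P l j) = A"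
      using Qhit_step[OF jp False] by (simp add: A_def lyap_base_def algebra_simps)
    thus ?thesis using E False A unfolding A_def by simp
  qed
qed

lemma generator_lyap_comp:
  assumes tr: "traffic lam P nu"
  shows "generator lam mu P (lyap_comp P \<gamma> j) x
           = lyap_comp P \<gamma> j x * (\<gamma> j * (1 - return_prob P j))
               * (nu j - (if 0 < x j then mu j / (1 + \<gamma> j) else 0))"
proof -
  let ?f = "lyap_comp P \<gamma> j x" and ?a = "lyap_base P \<gamma> j"
  have P_diag: "P $ i $ i = 0" for i using jp by (simp add: jackson_params_def)
  have arrivals: "(\<Sum>i\<in>UNIV. lam i * (lyap_comp P \<gamma> j (arrive x i) - ?f))
                    = ?f * (\<gamma> j * (\<Sum>i\<in>UNIV. lam i * Qhit P i j))"
    by (simp add: lyap_comp_arrive sum_distrib_left lyap_base_def algebra_simps)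
  have service: "(if 0 < x i then mu i * exit_prob P i * (lyap_comp P \<gamma> j (depart x i) - ?f) else 0)
      + (\<Sum>l\<in>UNIV. if l \<noteq> i \<and> 0 < x i
                    then mu i * P $ i $ l * (lyap_comp P \<gamma> j (transfer x i l) - ?f) else 0)
      = (if i = j \<and> 0 < x j then - ?f * mu j * \<gamma> j * (1 - return_prob P j) / (1 + \<gamma> j) else 0)"
    for i
  proof (cases "0 < x i")
    case True
    have "(\<Sum>l\<in>UNIV. if l \<noteq> i \<and> 0 < x i
                       then mu i * P $ i $ l * (lyap_comp P \<gamma> j (transfer x i l) - ?f) else 0)
            = ?f * mu i * (\<Sum>l\<in>UNIV. P $ i $ l * (?a l / ?a i - 1))"
      using True
      by (simp add: sum_distrib_left, intro sum.cong refl)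
        (auto simp: lyap_comp_transfer P_diag field_simps)
    moreover have "mu i * exit_prob P i * (lyap_comp P \<gamma> j (depart x i) - ?f)
                     = ?f * mu i * (exit_prob P i * (1 / ?a i - 1))"
      using True by (simp add: lyap_comp_depart field_simps)
    ultimately have "(if 0 < x i then mu i * exit_prob P i * (lyap_comp P \<gamma> j (depart x i) - ?f) else 0)
      + (\<Sum>l\<in>UNIV. if l \<noteq> i \<and> 0 < x i
                    then mu i * P $ i $ l * (lyap_comp P \<gamma> j (transfer x i l) - ?f) else 0)
      = ?f * mu i * (exit_prob P i * (1 / ?a i - 1) + (\<Sum>l\<in>UNIV. P $ i $ l * (?a l / ?a i - 1)))"
      using True by (simp add: distrib_left)
    thus ?thesis
      unfolding service_increment using True by auto
  qed auto
  have "generator lam mu P (lyap_comp P \<gamma> j) x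
          = ?f * (\<gamma> j * (\<Sum>i\<in>UNIV. lam i * Qhit P i j))
            + (if 0 < x j then - ?f * mu j * \<gamma> j * (1 - return_prob P j) / (1 + \<gamma> j) else 0)"
    unfolding generator_explicit arrivals add.assoc sum.distrib[symmetric] service
    by (simp add: if_distrib cong: if_cong)
  moreover have "1 + \<gamma> j \<noteq> 0" using \<gamma>_nonneg[of j] by simp
  ultimately show ?thesis
    unfolding traffic_Qhit[OF jp tr] by (cases "0 < x j") (simp_all add: field_simps)
qed

lemma generator_lyap_fun:
  assumes "traffic lam P nu"
  shows "generator lam mu P (lyap_fun P \<gamma>) x
           = (\<Sum>j\<in>UNIV. lyap_comp P \<gamma> j x * (\<gamma> j * (1 - return_prob P j))
                * (nu j - (if 0 < x j then mu j / (1 + \<gamma> j) else 0)))"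
  unfolding lyap_fun_def generator_sum generator_lyap_comp[OF assms] ..

end

lemma compact_simplex_face:
  "compact {v :: real^'d::finite. (\<forall>k. 0 \<le> v $ k) \<and> v $ j = 0 \<and> (\<Sum>k\<in>UNIV. v $ k) = 1}"
  (is "compact ?T")
proof (subst compact_eq_bounded_closed, intro conjI)
  show "bounded ?T" unfolding bounded_iff
  proof (intro exI ballI)
    fix v assume "v \<in> ?T"
    thus "norm v \<le> 1" using norm_le_l1_cart[of v] by simp
  qed
  show "closed ?T"
    by (intro closed_Collect_conj closed_Collect_all closed_Collect_le closed_Collect_eq
        continuous_intros)
qed

lemma compact_continuous_pos_lower_bound:
  fixes \<psi> :: "'a::topological_space \<Rightarrow> real"
  assumes "compact T" "continuous_on T \<psi>" "\<And>v. v \<in> T \<Longrightarrow> \<psi> v > 0"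
  shows "\<exists>\<delta>>0. \<forall>v\<in>T. \<delta> \<le> \<psi> v"
proof (cases "T = {}")
  case False
  then obtain v0 where "v0 \<in> T" "\<And>v. v \<in> T \<Longrightarrow> \<psi> v0 \<le> \<psi> v"
    using continuous_attains_inf[OF assms(1) _ assms(2)] by blast
  thus ?thesis using assms(3) by blast
qed (auto intro: exI[of _ 1])

lemma Gamma_set_pointwise_gap:
  fixes P :: "real^'d::finite^'d"
  assumes \<gamma>: "\<gamma> \<in> Gamma_set P"
    and v: "\<forall>k. 0 \<le> v $ k" "v $ j = 0" "(\<Sum>k\<in>UNIV. v $ k) = 1"
  shows "\<exists>i. 0 < (\<Sum>l\<in>UNIV. (gvec P \<gamma> i l - gvec P \<gamma> j l) * v $ l)"
proof -
  have "\<exists>k. v $ k \<noteq> 0"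
  proof (rule ccontr)
    assume "\<not> (\<exists>k. v $ k \<noteq> 0)"
    with v(3) show False by simp
  qed
  hence "(\<Sum>l\<in>UNIV. gvec P \<gamma> j l * v $ l) < (MAX i. \<Sum>l\<in>UNIV. gvec P \<gamma> i l * v $ l)"
    using \<gamma> v unfolding Gamma_set_def by blast
  moreover have "(MAX i. \<Sum>l\<in>UNIV. gvec P \<gamma> i l * v $ l) \<in> range (\<lambda>i. \<Sum>l\<in>UNIV. gvec P \<gamma> i l * v $ l)"
    by (rule Max_in) auto
  then obtain i where "(MAX i. \<Sum>l\<in>UNIV. gvec P \<gamma> i l * v $ l) = (\<Sum>l\<in>UNIV. gvec P \<gamma> i l * v $ l)"
    by blast
  ultimately show ?thesis
    by (auto simp: left_diff_distrib sum_subtractf)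
qed

lemma Gamma_set_gap:
  fixes P :: "real^'d::finite^'d" and j :: 'd
  assumes \<gamma>: "\<gamma> \<in> Gamma_set P"
  defines "D \<equiv> \<lambda>k v. \<Sum>l\<in>UNIV. (gvec P \<gamma> k l - gvec P \<gamma> j l) * v $ l"
  shows "\<exists>\<delta>>0. \<forall>v :: real^'d. (\<forall>k. 0 \<le> v $ k) \<and> v $ j = 0 \<and> (\<Sum>k\<in>UNIV. v $ k) = 1
           \<longrightarrow> (\<exists>k. \<delta> \<le> D k v)"
proof -
  define T where "T = {v :: real^'d. (\<forall>k. 0 \<le> v $ k) \<and> v $ j = 0 \<and> (\<Sum>k\<in>UNIV. v $ k) = 1}"
  define \<psi> where "\<psi> v = (\<Sum>k\<in>UNIV. max 0 (D k v))" for v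
  have \<psi>_pos: "\<psi> v > 0" if "v \<in> T" for v
  proof -
    obtain i where "0 < D i v"
      using Gamma_set_pointwise_gap[OF \<gamma>, of v j] \<open>v \<in> T\<close> unfolding T_def D_def by blast
    also have "\<dots> \<le> \<psi> v"
      unfolding \<psi>_def by (rule order_trans[OF _ member_le_sum[of i]]) auto
    finally show ?thesis .
  qed
  have "continuous_on T \<psi>" unfolding \<psi>_def D_def by (intro continuous_intros)
  then obtain \<delta> where \<delta>: "\<delta> > 0" "\<And>v. v \<in> T \<Longrightarrow> \<delta> \<le> \<psi> v"
    using compact_continuous_pos_lower_bound[of T \<psi>] compact_simplex_face[of j, folded T_def] \<psi>_pos
    by blast
  show ?thesis
  proof (intro exI[of _ "\<delta> / CARD('d)"] conjI allI impI)
    show "\<delta> / CARD('d) > 0" using \<delta> by simp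
    fix v :: "real^'d" assume "(\<forall>k. 0 \<le> v $ k) \<and> v $ j = 0 \<and> (\<Sum>k\<in>UNIV. v $ k) = 1"
    hence "v \<in> T" by (simp add: T_def)
    show "\<exists>k. \<delta> / CARD('d) \<le> D k v"
    proof (rule ccontr)
      assume "\<not> ?thesis"
      hence "max 0 (D k v) < \<delta> / CARD('d)" for k using \<delta>(1) by (auto simp: not_le)
      hence "\<psi> v < (\<Sum>k\<in>(UNIV::'d set). \<delta> / CARD('d))"
        unfolding \<psi>_def by (intro sum_strict_mono) auto
      with \<delta>(2)[OF \<open>v \<in> T\<close>] show False by simp
    qed
  qed
qed

lemma Gamma_set_separation:
  fixes P :: "real^'d::finite^'d"
  assumes "\<gamma> \<in> Gamma_set P"
  shows "\<exists>\<delta>>0. \<forall>x :: 'd \<Rightarrow> nat. x j = 0 \<longrightarrow> (\<exists>k.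
           \<delta> * (\<Sum>l\<in>UNIV. real (x l))
             \<le> (\<Sum>l\<in>UNIV. gvec P \<gamma> k l * real (x l)) - (\<Sum>l\<in>UNIV. gvec P \<gamma> j l * real (x l)))"
proof -
  obtain \<delta> where \<delta>: "\<delta> > 0" "\<And>v :: real^'d. (\<forall>k. 0 \<le> v $ k) \<and> v $ j = 0 \<and> (\<Sum>k\<in>UNIV. v $ k) = 1
      \<Longrightarrow> \<exists>k. \<delta> \<le> (\<Sum>l\<in>UNIV. (gvec P \<gamma> k l - gvec P \<gamma> j l) * v $ l)"
    using Gamma_set_gap[OF assms, of j] by blast
  show ?thesis
  proof (intro exI[of _ \<delta>] conjI allI impI \<delta>(1))
    fix x :: "'d \<Rightarrow> nat" assume xj: "x j = 0"
    define s where "s = (\<Sum>l\<in>UNIV. real (x l))"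
    show "\<exists>k. \<delta> * s \<le> (\<Sum>l\<in>UNIV. gvec P \<gamma> k l * real (x l)) - (\<Sum>l\<in>UNIV. gvec P \<gamma> j l * real (x l))"
    proof (cases "s = 0")
      case False
      hence s: "s > 0" unfolding s_def by (metis sum_nonneg of_nat_0_le_iff order_neq_le_trans)
      obtain k where "\<delta> \<le> (\<Sum>l\<in>UNIV. (gvec P \<gamma> k l - gvec P \<gamma> j l) * (real (x l) / s))"
        using \<delta>(2)[of "\<chi> l. real (x l) / s"] s xj
        by (auto simp: sum_divide_distrib[symmetric] s_def)
      hence "\<delta> * s \<le> (\<Sum>l\<in>UNIV. (gvec P \<gamma> k l - gvec P \<gamma> j l) * real (x l))"
        using s by (simp add: sum_divide_distrib[symmetric] pos_le_divide_eq)
      thus ?thesis by (auto simp: left_diff_distrib sum_subtractf)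
    qed (intro exI[of _ j], simp)
  qed
qed

lemma lyap_comp_small_at_empty_queue:
  fixes P :: "real^'d::finite^'d"
  assumes "\<gamma> \<in> Gamma_set P"
  shows "\<exists>\<delta>>0. \<forall>j x. x j = 0 \<longrightarrow>
           lyap_comp P \<gamma> j x \<le> exp (- \<delta> * (\<Sum>l\<in>UNIV. real (x l))) * lyap_fun P \<gamma> x"
proof -
  obtain \<delta>j where \<delta>j: "\<And>j. \<delta>j j > 0" "\<And>j x. x j = 0 \<Longrightarrow> \<exists>k.
      \<delta>j j * (\<Sum>l\<in>UNIV. real (x l))
        \<le> (\<Sum>l\<in>UNIV. gvec P \<gamma> k l * real (x l)) - (\<Sum>l\<in>UNIV. gvec P \<gamma> j l * real (x l))"
    using Gamma_set_separation[OF assms] by metis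
  define \<delta> where "\<delta> = Min (range \<delta>j)"
  have \<delta>: "\<delta> > 0" "\<delta> \<le> \<delta>j j" for j
    unfolding \<delta>_def using \<delta>j(1) by (auto simp: Min_gr_iff)
  show ?thesis
  proof (intro exI[of _ \<delta>] conjI allI impI \<delta>(1))
    fix j and x :: "'d \<Rightarrow> nat" assume "x j = 0"
    then obtain k where k: "\<delta>j j * (\<Sum>l\<in>UNIV. real (x l))
        \<le> (\<Sum>l\<in>UNIV. gvec P \<gamma> k l * real (x l)) - (\<Sum>l\<in>UNIV. gvec P \<gamma> j l * real (x l))"
      using \<delta>j(2) by blast
    have "\<delta> * (\<Sum>l\<in>UNIV. real (x l)) \<le> \<delta>j j * (\<Sum>l\<in>UNIV. real (x l))"
      using \<delta>(2)[of j] by (intro mult_right_mono) (auto simp: sum_nonneg)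
    with k have "lyap_comp P \<gamma> j x \<le> exp (- \<delta> * (\<Sum>l\<in>UNIV. real (x l))) * lyap_comp P \<gamma> k x"
      unfolding lyap_comp_def by (simp add: exp_add[symmetric])
    also have "\<dots> \<le> exp (- \<delta> * (\<Sum>l\<in>UNIV. real (x l))) * lyap_fun P \<gamma> x"
      by (simp add: lyap_comp_le_lyap_fun)
    finally show "lyap_comp P \<gamma> j x \<le> exp (- \<delta> * (\<Sum>l\<in>UNIV. real (x l))) * lyap_fun P \<gamma> x" .
  qed
qed

lemma generator_lyap_fun_le:
  fixes lam mu nu :: "'d::finite \<Rightarrow> real"
  assumes jp: "jackson_params lam mu P" and hA: "hypA lam mu P" and tr: "traffic lam P nu"
    and \<gamma>_nonneg: "\<And>i. \<gamma> i \<ge> 0"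
  defines "m \<equiv> MIN i. \<gamma> i / (Gmat P $ i $ i) * (mu i / (1 + \<gamma> i) - nu i)"
  shows "\<exists>K\<ge>0. \<forall>x. generator lam mu P (lyap_fun P \<gamma>) x
                    \<le> - m * lyap_fun P \<gamma> x + K * (\<Sum>j | x j = 0. lyap_comp P \<gamma> j x)"
proof -
  define \<kappa> where "\<kappa> j = \<gamma> j * (1 - return_prob P j)" for j
  define K where "K = (\<Sum>j\<in>UNIV. \<bar>\<kappa> j * nu j\<bar>) + \<bar>m\<bar>"
  have \<kappa>: "\<kappa> j = \<gamma> j / Gmat P $ j $ j" for j
    using Gmat_diag_return_prob[OF jp hA, of j] unfolding \<kappa>_def
    by (metis mult_cancel_left1 nonzero_mult_div_cancel_left times_divide_eq_right zero_neq_one)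
  have coeff: "\<kappa> j * (nu j - (if 0 < x j then mu j / (1 + \<gamma> j) else 0))
                 \<le> - m + (if x j = 0 then K else 0)" for j and x :: "'d \<Rightarrow> nat"
  proof (cases "x j = 0")
    case True
    have "\<kappa> j * nu j \<le> (\<Sum>j\<in>UNIV. \<bar>\<kappa> j * nu j\<bar>)"
      by (rule order_trans[OF abs_ge_self member_le_sum[of j]]) auto
    thus ?thesis using True unfolding K_def by simp
  next
    case False
    have "m \<le> \<gamma> j / (Gmat P $ j $ j) * (mu j / (1 + \<gamma> j) - nu j)"
      unfolding m_def by (rule Min_le) auto
    thus ?thesis using False by (simp add: \<kappa> algebra_simps)
  qed
  show ?thesis
  proof (intro exI[of _ K] conjI allI)
    show "K \<ge> 0" unfolding K_def by (simp add: sum_nonneg)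
    fix x
    have "generator lam mu P (lyap_fun P \<gamma>) x
            \<le> (\<Sum>j\<in>UNIV. lyap_comp P \<gamma> j x * (- m + (if x j = 0 then K else 0)))"
      unfolding generator_lyap_fun[OF jp \<gamma>_nonneg tr] \<kappa>_def[symmetric] mult.assoc
      by (intro sum_mono mult_left_mono coeff) (simp add: less_imp_le[OF lyap_comp_pos])
    also have "\<dots> = - m * lyap_fun P \<gamma> x + K * (\<Sum>j | x j = 0. lyap_comp P \<gamma> j x)"
    proof -
      have "(\<Sum>j\<in>UNIV. lyap_comp P \<gamma> j x * (if x j = 0 then K else 0))
              = (\<Sum>j | x j = 0. K * lyap_comp P \<gamma> j x)"
        by (simp add: if_distrib[of "\<lambda>a. _ * a"] sum.If_cases mult.commute cong: if_cong)
      thus ?thesis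
        unfolding distrib_left sum.distrib by (simp add: lyap_fun_def sum_distrib_left mult.commute)
    qed
    finally show "generator lam mu P (lyap_fun P \<gamma>) x
                    \<le> - m * lyap_fun P \<gamma> x + K * (\<Sum>j | x j = 0. lyap_comp P \<gamma> j x)" .
  qed
qed

lemma finite_total_less: "finite {x :: 'd::finite \<Rightarrow> nat. (\<Sum>l\<in>UNIV. x l) < N}"
proof (rule finite_subset)
  show "{x :: 'd \<Rightarrow> nat. (\<Sum>l\<in>UNIV. x l) < N} \<subseteq> {x. \<forall>l. (l \<in> UNIV \<longrightarrow> x l \<in> {..N}) \<and> (l \<notin> UNIV \<longrightarrow> x l = 0)}"
  proof (intro subsetI CollectI allI conjI impI)
    fix x :: "'d \<Rightarrow> nat" and l assume "x \<in> {x. (\<Sum>l\<in>UNIV. x l) < N}"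
    thus "x l \<in> {..N}" using member_le_sum[of l UNIV x] by simp
  qed simp
  show "finite {x :: 'd \<Rightarrow> nat. \<forall>l. (l \<in> UNIV \<longrightarrow> x l \<in> {..N}) \<and> (l \<notin> UNIV \<longrightarrow> x l = 0)}"
    by (rule finite_set_of_finite_funs) auto
qed

lemma exp_decay_eventually_le:
  fixes K \<delta> g :: real
  assumes \<delta>: "\<delta> > 0" and g: "g > 0"
  shows "\<exists>N::nat. \<forall>s \<ge> real N. K * exp (- \<delta> * s) \<le> g"
proof -
  obtain N :: nat where N: "K / (g * \<delta>) \<le> N"
    using real_nat_ceiling_ge by blast
  have "K * exp (- \<delta> * s) \<le> g" if s: "real N \<le> s" for s
  proof -
    have "K \<le> g * (\<delta> * real N)"
      using N g \<delta> by (simp add: pos_divide_le_eq algebra_simps)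
    also have "\<dots> \<le> g * exp (\<delta> * s)"
    proof (rule mult_left_mono)
      have "\<delta> * real N \<le> \<delta> * s" using s \<delta> by simp
      also have "\<dots> \<le> exp (\<delta> * s)" using exp_ge_add_one_self[of "\<delta> * s"] by linarith
      finally show "\<delta> * real N \<le> exp (\<delta> * s)" .
    qed (use g in simp)
    finally show ?thesis by (simp add: exp_minus field_simps)
  qed
  thus ?thesis by blast
qed

text \<open>Away from a finite set the boundary terms are exponentially small, so the drift of the
  Lyapunov function beats any rate below the minimum.\<close>

lemma lyap_fun_drift:
  fixes lam mu nu :: "'d::finite \<Rightarrow> real"
  assumes jp: "jackson_params lam mu P" and hA: "hypA lam mu P" and tr: "traffic lam P nu"
    and \<gamma>: "\<gamma> \<in> Gamma_set P"
    and m': "m' < (MIN i. \<gamma> i / (Gmat P $ i $ i) * (mu i / (1 + \<gamma> i) - nu i))"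
  shows "\<exists>E. finite E \<and>
           (\<forall>x. x \<notin> E \<longrightarrow> generator lam mu P (lyap_fun P \<gamma>) x \<le> - m' * lyap_fun P \<gamma> x)"
proof -
  define m where "m = (MIN i. \<gamma> i / (Gmat P $ i $ i) * (mu i / (1 + \<gamma> i) - nu i))"
  define d where "d = real CARD('d)"
  have "\<forall>i. \<gamma> i \<ge> 0" using \<gamma> by (simp add: Gamma_set_def)
  then obtain K where K: "K \<ge> 0" "\<And>x. generator lam mu P (lyap_fun P \<gamma>) x
      \<le> - m * lyap_fun P \<gamma> x + K * (\<Sum>j | x j = 0. lyap_comp P \<gamma> j x)"
    using generator_lyap_fun_le[OF jp hA tr] unfolding m_def by blast
  obtain \<delta> where \<delta>: "\<delta> > 0" "\<And>j x. x j = 0 \<Longrightarrow>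
      lyap_comp P \<gamma> j x \<le> exp (- \<delta> * (\<Sum>l\<in>UNIV. real (x l))) * lyap_fun P \<gamma> x"
    using lyap_comp_small_at_empty_queue[OF \<gamma>] by blast
  have gap: "m - m' > 0" using m' unfolding m_def by simp
  obtain N :: nat where N: "\<And>s. real N \<le> s \<Longrightarrow> K * d * exp (- \<delta> * s) \<le> m - m'"
    using exp_decay_eventually_le[OF \<delta>(1) gap] by blast
  show ?thesis
  proof (intro exI[of _ "{x. (\<Sum>l\<in>UNIV. x l) < N}"] conjI allI impI finite_total_less)
    fix x :: "'d \<Rightarrow> nat" assume "x \<notin> {x. (\<Sum>l\<in>UNIV. x l) < N}"
    hence "real N \<le> (\<Sum>l\<in>UNIV. real (x l))" by (simp flip: of_nat_sum)
    define e where "e = exp (- \<delta> * (\<Sum>l\<in>UNIV. real (x l)))"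
    have Kde: "K * d * e \<le> m - m'"
      unfolding e_def by (rule N) fact
    have "(\<Sum>j | x j = 0. lyap_comp P \<gamma> j x) \<le> (\<Sum>j | x j = 0. e * lyap_fun P \<gamma> x)"
      by (rule sum_mono) (use \<delta>(2) in \<open>simp add: e_def\<close>)
    also have "\<dots> = card {j. x j = 0} * (e * lyap_fun P \<gamma> x)"
      by simp
    also have "\<dots> \<le> d * (e * lyap_fun P \<gamma> x)"
      unfolding d_def using card_mono[of UNIV "{j. x j = 0}"] lyap_fun_pos[of P \<gamma> x]
      by (intro mult_right_mono) (simp_all add: e_def)
    finally have "K * (\<Sum>j | x j = 0. lyap_comp P \<gamma> j x) \<le> K * (d * (e * lyap_fun P \<gamma> x))"
      using K(1) by (rule mult_left_mono)
    also have "\<dots> = (K * d * e) * lyap_fun P \<gamma> x"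
      by (simp add: algebra_simps)
    also have "\<dots> \<le> (m - m') * lyap_fun P \<gamma> x"
      using Kde by (intro mult_right_mono) (simp_all add: less_imp_le[OF lyap_fun_pos])
    finally show "generator lam mu P (lyap_fun P \<gamma>) x \<le> - m' * lyap_fun P \<gamma> x"
      using K(2)[of x] by (simp add: left_diff_distrib)
  qed
qed

lemma infinite_states: "infinite (UNIV :: ('d \<Rightarrow> nat) set)"
proof
  assume "finite (UNIV :: ('d \<Rightarrow> nat) set)"
  hence "finite (range (\<lambda>n::nat. (\<lambda>_::'d. n)))" by (rule finite_subset[rotated]) auto
  moreover have "inj (\<lambda>n::nat. (\<lambda>_::'d. n))" by (auto simp: inj_def fun_eq_iff)
  ultimately show False using finite_imageD by blast
qed

lemma drift_imp_mem_ess_set: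
  fixes f :: "('d::finite \<Rightarrow> nat) \<Rightarrow> real"
  assumes jp: "jackson_params lam mu P" and f_pos: "\<And>z. f z > 0" and E: "finite E"
    and drift: "\<And>x. x \<notin> E \<Longrightarrow> generator lam mu P f x \<le> - a * f x"
    and r: "r > 0" "- a < ln r"
  shows "r \<in> ess_set lam mu P"
proof -
  define c where "c = unif_const lam mu"
  define \<rho> where "\<rho> = 1 - a / c"
  have c: "c \<ge> 1" unfolding c_def by (rule unif_const_ge_1[OF jp])
  have kernel_drift: "(\<Sum>\<^sub>\<infinity>z. unif_kernel lam mu P x z * f z) \<le> \<rho> * f x" if "x \<notin> E" for x
  proof -
    have "generator lam mu P f x / c \<le> - a * f x / c"
      using divide_right_mono[OF drift[OF that], of c] c by simp
    thus ?thesis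
      unfolding infsum_unif_kernel_generator c_def[symmetric] \<rho>_def by (simp add: algebra_simps)
  qed
  have \<rho>: "\<rho> \<ge> 0"
  proof -
    obtain x0 where x0: "x0 \<notin> E" using ex_new_if_finite[OF infinite_states E] by blast
    have "0 \<le> (\<Sum>\<^sub>\<infinity>z. unif_kernel lam mu P x0 z * f z)"
      using unif_kernel_nonneg[OF jp] f_pos by (intro infsum_nonneg) (simp add: less_imp_le)
    with kernel_drift[OF x0] have "0 \<le> \<rho> * f x0" by linarith
    thus ?thesis using f_pos[of x0] by (simp add: zero_le_mult_iff)
  qed
  have "(\<integral>\<^sup>+ t\<in>{0..}. ennreal (r powr (- t) * taboo_prob lam mu P E t x y) \<partial>lborel) < \<infinity>"
    if "x \<notin> E" for x y
  proof (rule nn_integral_powr_exp_decay_finite[OF r(1)])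
    show "a + ln r > 0" using r(2) by simp
    show "f x / f y \<ge> 0" using f_pos[of x] f_pos[of y] by simp
    show "taboo_prob lam mu P E t x y \<le> f x / f y * exp (- a * t)" if "t \<ge> 0" for t
      using taboo_prob_le[OF jp f_pos \<rho> kernel_drift \<open>x \<notin> E\<close> that, of y] c
      by (simp add: \<rho>_def c_def[symmetric])
  qed
  thus ?thesis unfolding ess_set_def using r(1) E by blast
qed

lemma mem_ess_set_gt:
  fixes lam mu :: "'d::finite \<Rightarrow> real"
  assumes jp: "jackson_params lam mu P" and r: "r \<in> ess_set lam mu P"
  shows "exp (- unif_const lam mu) < r"
proof (rule ccontr)
  assume "\<not> exp (- unif_const lam mu) < r"
  from r obtain E where r0: "r > 0" and E: "finite E" and
    I: "\<And>x y. x \<notin> E \<Longrightarrow> y \<notin> E \<Longrightarrow>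
      (\<integral>\<^sup>+ t\<in>{0..}. ennreal (r powr (- t) * taboo_prob lam mu P E t x y) \<partial>lborel) < \<infinity>"
    unfolding ess_set_def by blast
  have "ln r \<le> - unif_const lam mu"
    using \<open>\<not> exp (- unif_const lam mu) < r\<close> r0
    by (metis exp_gt_zero ln_exp ln_le_cancel_iff not_less)
  moreover obtain x :: "'d \<Rightarrow> nat" where x: "x \<notin> E"
    using ex_new_if_finite[OF infinite_states E] by blast
  ultimately have "(\<integral>\<^sup>+ t\<in>{0..}. ennreal (r powr (- t) * taboo_prob lam mu P E t x x) \<partial>lborel) = \<infinity>"
    using taboo_prob_diag_ge[OF jp] r0 by (intro nn_integral_powr_exp_growth_infinite) auto
  with I[OF x x] show False by simp
qed

lemma ln_Inf_le:
  fixes S :: "real set"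
  assumes upper: "\<And>r. exp (- m) < r \<Longrightarrow> r \<in> S" and lower: "\<And>r. r \<in> S \<Longrightarrow> b < r" and b: "b > 0"
  shows "S \<noteq> {}" and "ln (Inf S) \<le> - m"
proof -
  show ne: "S \<noteq> {}" using upper[of "exp (- m) + 1"] by auto
  have bdd: "bdd_below S" using lower by (meson bdd_below.I less_imp_le)
  have "Inf S \<le> Inf {exp (- m)<..}"
    by (rule cInf_superset_mono) (use upper bdd in auto)
  hence "Inf S \<le> exp (- m)" by simp
  moreover have "b \<le> Inf S"
    by (rule cInf_greatest[OF ne]) (use lower in \<open>auto intro: less_imp_le\<close>)
  ultimately show "ln (Inf S) \<le> - m"
    using b by (metis exp_gt_zero ln_exp ln_le_cancel_iff order_less_le_trans)
qed

lemma mem_ess_set_above_exp_neg_min: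
  fixes lam mu nu :: "'d::finite \<Rightarrow> real"
  assumes jp: "jackson_params lam mu P" and hA: "hypA lam mu P" and tr: "traffic lam P nu"
    and \<gamma>: "\<gamma> \<in> Gamma_set P"
    and r: "exp (- (MIN i. \<gamma> i / (Gmat P $ i $ i) * (mu i / (1 + \<gamma> i) - nu i))) < r"
  shows "r \<in> ess_set lam mu P"
proof -
  define m where "m = (MIN i. \<gamma> i / (Gmat P $ i $ i) * (mu i / (1 + \<gamma> i) - nu i))"
  have r': "exp (- m) < r" using r unfolding m_def .
  hence "r > 0" by (smt (verit) exp_gt_zero)
  hence "- m < ln r" using r' by (metis exp_gt_zero ln_exp ln_less_cancel_iff)
  hence "(m - ln r) / 2 < m" and "- ((m - ln r) / 2) < ln r" by (simp_all add: field_simps)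
  obtain E where "finite E" "\<And>x. x \<notin> E \<Longrightarrow>
      generator lam mu P (lyap_fun P \<gamma>) x \<le> - ((m - ln r) / 2) * lyap_fun P \<gamma> x"
    using lyap_fun_drift[OF jp hA tr \<gamma> \<open>(m - ln r) / 2 < m\<close>[unfolded m_def]]
    unfolding m_def by blast
  from drift_imp_mem_ess_set[OF jp lyap_fun_pos this \<open>r > 0\<close>] show ?thesis
    using \<open>- ((m - ln r) / 2) < ln r\<close> by blast
qed

theorem corollary2p2:
  fixes lam mu nu :: "'d::finite \<Rightarrow> real" and P :: "real^'d^'d"
  assumes "jackson_params lam mu P"
    and "hypA lam mu P"
    and "traffic lam P nu"
    and "\<forall>i. nu i < mu i"
  shows "\<forall>\<gamma>\<in>Gamma_set P. ess_set lam mu P \<noteq> {} \<and>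
           ln (ess_spec_rad lam mu P)
             \<le> - (MIN i. \<gamma> i / (Gmat P $ i $ i) * (mu i / (1 + \<gamma> i) - nu i))"
proof
  fix \<gamma> assume "\<gamma> \<in> Gamma_set P"
  note bounds = ln_Inf_le[OF mem_ess_set_above_exp_neg_min[OF assms(1-3) this]
                            mem_ess_set_gt[OF assms(1)] exp_gt_zero]
  show "ess_set lam mu P \<noteq> {} \<and>
          ln (ess_spec_rad lam mu P)
            \<le> - (MIN i. \<gamma> i / (Gmat P $ i $ i) * (mu i / (1 + \<gamma> i) - nu i))"
    using bounds unfolding ess_spec_rad_def by blast
qed

end
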